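(* Let $l\in\mathbb N_0$ and assume $x_1^{2l+1}\ne0$, $x_2^2\ne0$, $y_{l+1}\ne0$ in $\mathfrak B(V)$, and that $y_{l+1}y_l$ lies in the linear span of $\{y_ry_s:0\le r\le s\}$. Then $q_{11}^{l(l+1)}\widetilde q_{12}^{\,l+1}q_{22}=1$ and $y_{l+1}y_l=q_{11}^{l(l+1)}q_{12}^{l+1}q_{21}^{l}q_{22}\,y_ly_{l+1}$.
   Context: $\Bbbk$ algebraically closed of characteristic $0$. $V$ is braided of diagonal type with basis $x_1,x_2$, $c(x_i\otimes x_j)=q_{ij}x_j\otimes x_i$, $q_{ij}\in\Bbbk^\times$, $q_{ii}\ne1$, $\widetilde q_{12}=q_{12}q_{21}$; $\mathfrak B(V)$ is its Nichols algebra. $y_0=x_2$, $y_{k+1}=x_1y_k-q_{11}^kq_{12}y_kx_1$ (i.e. $y_k=(\mathrm{ad}_cx_1)^kx_2$). *)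

theory Defs
  imports "HOL-Computational_Algebra.Polynomial"
begin

text \<open>Tensor algebra T(V) of V with basis x_1, x_2, modelled as coefficient
functions on words (lists of letters 1,2).  Products are convolution over
splittings of a word, so they are always finite sums.\<close>

type_synonym 'k tens = "nat list \<Rightarrow> 'k"

definition tone :: "'k::field tens" where
  "tone = (\<lambda>w. if w = [] then 1 else 0)"

definition tgen :: "nat \<Rightarrow> 'k::field tens" where
  "tgen i = (\<lambda>w. if w = [i] then 1 else 0)"

definition tadd :: "'k::field tens \<Rightarrow> 'k tens \<Rightarrow> 'k tens" where
  "tadd f g = (\<lambda>w. f w + g w)"

definition tsub :: "'k::field tens \<Rightarrow> 'k tens \<Rightarrow> 'k tens" where
  "tsub f g = (\<lambda>w. f w - g w)"

definition tsmult :: "'k::field \<Rightarrow> 'k tens \<Rightarrow> 'k tens" where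
  "tsmult c f = (\<lambda>w. c * f w)"

definition tmult :: "'k::field tens \<Rightarrow> 'k tens \<Rightarrow> 'k tens" where
  "tmult f g = (\<lambda>w. \<Sum>k\<le>length w. f (take k w) * g (drop k w))"

fun tpow :: "'k::field tens \<Rightarrow> nat \<Rightarrow> 'k tens" where
  "tpow f 0 = tone"
| "tpow f (Suc n) = tmult f (tpow f n)"

text \<open>Skew derivation \<partial>_i, determined by \<partial>_i(x_j) = \<delta>_ij and
\<partial>_i(uv) = u \<partial>_i(v) + \<partial>_i(u) K_i(v), with K_i(x_j) = q_ij x_j.\<close>

definition tder :: "(nat \<Rightarrow> nat \<Rightarrow> 'k::field) \<Rightarrow> nat \<Rightarrow> 'k tens \<Rightarrow> 'k tens" where
  "tder q i f = (\<lambda>w. \<Sum>k\<le>length w.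
      f (take k w @ i # drop k w) * (\<Prod>a\<leftarrow>drop k w. q i a))"

text \<open>An element of T(V) is zero in the Nichols algebra B(V) iff it lies in the
Nichols ideal, i.e. iff every iterated skew derivative has vanishing constant
term (radical of the canonical Hopf pairing).\<close>

definition nichols_zero :: "(nat \<Rightarrow> nat \<Rightarrow> 'k::field) \<Rightarrow> 'k tens \<Rightarrow> bool" where
  "nichols_zero q f \<longleftrightarrow> (\<forall>w\<in>lists {1,2}. foldr (tder q) w f [] = 0)"

fun yy :: "(nat \<Rightarrow> nat \<Rightarrow> 'k::field) \<Rightarrow> nat \<Rightarrow> 'k tens" where
  "yy q 0 = tgen 2"
| "yy q (Suc k) = tsub (tmult (tgen 1) (yy q k))
                       (tsmult (q 1 1 ^ k * q 1 2) (tmult (yy q k) (tgen 1)))"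

end

theory Submission
  imports Defs
begin

text \<open>Pair an element of T(V) with the word x1^a x2 x1^b x2 by applying \<partial>2, then \<partial>1 b times,
  \<partial>2 and \<partial>1 a times, and taking the constant term. For y_r y_s this gives
  c_r c_s [a]! G(r,s,b) if a + b = r + s and 0 otherwise, where \<partial>2 y_k = c_k x1^k, [a]! is the
  q11-factorial and G is explicit (ycoef, qfall and gcoef below). The hypotheses give
  [a]! \<noteq> 0 for a \<le> 2l + 1 and c_l c_(l+1) \<noteq> 0. Pairing the assumed relation with these words
  yields a triangular linear system for the coefficients of the y_r y_s with r + s = 2l + 1; it
  forces G(l+1,l,b) = \<chi> G(l,l+1,b) for all b, where \<chi> is the braiding scalar of y_(l+1) and y_l.
  At b = 0 this reads q21^l (1 + q22) = \<chi> q21^(l+1) (1 + q22), and 1 + q22 \<noteq> 0 since x2^2 \<noteq> 0.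
  For all b together it says that every iterated derivative of y_(l+1) y_l - \<chi> y_l y_(l+1)
  vanishes.\<close>

section \<open>Skew derivations of the tensor algebra\<close>

definition tstrip :: "'k::field tens \<Rightarrow> nat \<Rightarrow> 'k tens" where
  "tstrip f a = (\<lambda>u. f (a # u))"

definition tK :: "(nat \<Rightarrow> nat \<Rightarrow> 'k::field) \<Rightarrow> nat \<Rightarrow> 'k tens \<Rightarrow> 'k tens" where
  "tK q i f = (\<lambda>w. f w * (\<Prod>a\<leftarrow>w. q i a))"

lemma tmult_Nil: "tmult f g [] = f [] * g []"
  by (simp add: tmult_def)

lemma tmult_Cons: "tmult f g (a # w) = f [] * g (a # w) + tmult (tstrip f a) g w"
  unfolding tmult_def tstrip_def
  by (simp add: sum.atMost_Suc_shift del: sum.atMost_Suc)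

lemma tder_Nil: "tder q i f [] = f [i]"
  by (simp add: tder_def)

lemma tder_Cons:
  "tder q i f (a # w) = f (i # a # w) * (\<Prod>x\<leftarrow>a # w. q i x) + tder q i (tstrip f a) w"
  unfolding tder_def tstrip_def
  by (simp add: sum.atMost_Suc_shift del: sum.atMost_Suc)

lemma tder_add: "tder q i (\<lambda>u. f u + g u) w = tder q i f w + tder q i g w"
  unfolding tder_def by (simp add: sum.distrib distrib_right)

lemma tder_diff: "tder q i (\<lambda>u. f u - g u) w = tder q i f w - tder q i g w"
  unfolding tder_def by (simp add: sum_subtractf left_diff_distrib)

lemma tder_cmult: "tder q i (\<lambda>u. c * f u) w = c * tder q i f w"
  unfolding tder_def by (simp add: sum_distrib_left mult.assoc)

lemma tder_sum: "tder q i (\<lambda>u. \<Sum>p\<in>S. h p u) w = (\<Sum>p\<in>S. tder q i (h p) w)"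
  unfolding tder_def by (simp add: sum_distrib_right sum.swap[of _ S])

lemma tder_zero: "tder q i (\<lambda>u. 0) w = 0"
  unfolding tder_def by simp

lemma tmult_addL: "tmult (\<lambda>u. f u + g u) h w = tmult f h w + tmult g h w"
  unfolding tmult_def by (simp add: sum.distrib distrib_right)

lemma tmult_cmultL: "tmult (\<lambda>u. c * f u) h w = c * tmult f h w"
  unfolding tmult_def by (simp add: sum_distrib_left mult.assoc)

lemma tmult_cmultR: "tmult h (\<lambda>u. c * f u) w = c * tmult h f w"
  unfolding tmult_def by (simp add: sum_distrib_left algebra_simps)

lemma tmult_zeroL: "tmult (\<lambda>u. 0) h w = 0"
  unfolding tmult_def by simp

lemma tmult_zeroR: "tmult h (\<lambda>u. 0) w = 0"
  unfolding tmult_def by simp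

lemma tmult_toneL: "tmult tone g w = g w"
  by (cases w) (simp_all add: tmult_Nil tmult_Cons tone_def tstrip_def tmult_zeroL)

lemma tmult_toneR: "tmult f tone w = f w"
  by (induction w arbitrary: f) (simp_all add: tmult_Nil tmult_Cons tone_def tstrip_def)

lemma prod_list_take_drop: "(\<Prod>x\<leftarrow>take k w. g x) * (\<Prod>x\<leftarrow>drop k w. g x) = (\<Prod>x\<leftarrow>w. g x)"
  by (metis append_take_drop_id map_append prod_list.append)

lemma tK_tmult: "tK q i (tmult f g) w = tmult (tK q i f) (tK q i g) w"
  unfolding tmult_def tK_def sum_distrib_right
proof (intro sum.cong refl)
  fix k
  show "f (take k w) * g (drop k w) * (\<Prod>a\<leftarrow>w. q i a)
      = f (take k w) * (\<Prod>a\<leftarrow>take k w. q i a) * (g (drop k w) * (\<Prod>a\<leftarrow>drop k w. q i a))"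
    by (simp flip: prod_list_take_drop[of "q i" k w] add: mult_ac)
qed

lemma tmult_weight_tK:
  "tmult (\<lambda>u. f u * (\<Prod>x\<leftarrow>a # u. q i x)) (tK q i g) w = (\<Prod>x\<leftarrow>a # w. q i x) * tmult f g w"
  unfolding tmult_def tK_def sum_distrib_left
proof (intro sum.cong refl)
  fix k
  show "f (take k w) * (\<Prod>x\<leftarrow>a # take k w. q i x) * (g (drop k w) * (\<Prod>x\<leftarrow>drop k w. q i x))
      = (\<Prod>x\<leftarrow>a # w. q i x) * (f (take k w) * g (drop k w))"
    by (simp flip: prod_list_take_drop[of "q i" k w] add: mult_ac)
qed

lemma tder_tmult:
  "tder q i (tmult f g) w = tmult f (tder q i g) w + tmult (tder q i f) (tK q i g) w"
proof (induction w arbitrary: f)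
  case Nil
  show ?case by (simp add: tder_Nil tmult_Nil tmult_Cons tK_def tstrip_def)
next
  case (Cons a w)
  let ?P = "\<lambda>v. (\<Prod>x\<leftarrow>v. q i x)"
  have strip_tmult: "tstrip (tmult f g) a = (\<lambda>u. f [] * tstrip g a u + tmult (tstrip f a) g u)"
    by (simp add: tstrip_def tmult_Cons)
  have strip_tder:
    "tstrip (tder q i f) a = (\<lambda>u. f (i # a # u) * ?P (a # u) + tder q i (tstrip f a) u)"
    by (simp add: tstrip_def tder_Cons)
  have "tder q i (tmult f g) (a # w)
      = tmult f g (i # a # w) * ?P (a # w) + tder q i (tstrip (tmult f g) a) w"
    by (rule tder_Cons)
  also have "tder q i (tstrip (tmult f g) a) w
      = f [] * tder q i (tstrip g a) w + tder q i (tmult (tstrip f a) g) w"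
    by (simp add: strip_tmult tder_add tder_cmult)
  also have "tder q i (tmult (tstrip f a) g) w
      = tmult (tstrip f a) (tder q i g) w + tmult (tder q i (tstrip f a)) (tK q i g) w"
    by (rule Cons.IH)
  also have "tmult f g (i # a # w)
      = f [] * g (i # a # w) + f [i] * g (a # w) + tmult (tstrip (tstrip f i) a) g w"
    by (simp add: tmult_Cons tstrip_def)
  finally have lhs: "tder q i (tmult f g) (a # w)
      = (f [] * g (i # a # w) + f [i] * g (a # w) + tmult (tstrip (tstrip f i) a) g w) * ?P (a # w)
        + (f [] * tder q i (tstrip g a) w + (tmult (tstrip f a) (tder q i g) w
           + tmult (tder q i (tstrip f a)) (tK q i g) w))" .
  have rhs1: "tmult f (tder q i g) (a # w)
      = f [] * (g (i # a # w) * ?P (a # w) + tder q i (tstrip g a) w) + tmult (tstrip f a) (tder q i g) w"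
    by (simp add: tmult_Cons tder_Cons)
  have "tmult (tder q i f) (tK q i g) (a # w)
      = f [i] * (g (a # w) * ?P (a # w)) + tmult (tstrip (tder q i f) a) (tK q i g) w"
    by (simp add: tmult_Cons tder_Nil tK_def)
  also have "tmult (tstrip (tder q i f) a) (tK q i g) w
      = ?P (a # w) * tmult (tstrip (tstrip f i) a) g w + tmult (tder q i (tstrip f a)) (tK q i g) w"
    unfolding strip_tder tmult_addL
    by (subst tmult_weight_tK[symmetric]) (simp add: tstrip_def)
  finally have rhs2: "tmult (tder q i f) (tK q i g) (a # w)
      = f [i] * (g (a # w) * ?P (a # w))
        + (?P (a # w) * tmult (tstrip (tstrip f i) a) g w + tmult (tder q i (tstrip f a)) (tK q i g) w)" .
  show ?case unfolding lhs rhs1 rhs2 by (simp add: algebra_simps)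
qed

lemma tder_tgen: "tder q i (tgen j) = (\<lambda>w. if i = j then tone w else 0)"
proof
  fix w
  show "tder q i (tgen j) w = (if i = j then tone w else 0)"
  proof (cases w)
    case Nil
    then show ?thesis by (simp add: tder_Nil tgen_def tone_def)
  next
    case (Cons a v)
    then have "take k w @ i # drop k w \<noteq> [j]" for k
      by (cases k) auto
    then show ?thesis using Cons by (simp add: tder_def tgen_def tone_def)
  qed
qed

lemma tder_tone: "tder q i tone = (\<lambda>w. 0)"
  by (rule ext) (simp add: tder_def tone_def)

lemma tK_tgen: "tK q i (tgen j) = (\<lambda>w. q i j * tgen j w)"
  by (rule ext) (simp add: tK_def tgen_def)

section \<open>Powers of \<open>x\<^sub>1\<close> and the elements \<open>y\<^sub>k\<close>\<close>

definition x1pow :: "nat \<Rightarrow> 'k::field tens" where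
  "x1pow m = tpow (tgen 1) m"

definition qint :: "(nat \<Rightarrow> nat \<Rightarrow> 'k::field) \<Rightarrow> nat \<Rightarrow> 'k" where
  "qint q k = (\<Sum>j<k. q 1 1 ^ j)"

definition qfall :: "(nat \<Rightarrow> nat \<Rightarrow> 'k::field) \<Rightarrow> nat \<Rightarrow> nat \<Rightarrow> 'k" where
  "qfall q m b = (\<Prod>j<b. qint q (m - j))"

definition ycoef :: "(nat \<Rightarrow> nat \<Rightarrow> 'k::field) \<Rightarrow> nat \<Rightarrow> 'k" where
  "ycoef q k = (\<Prod>j<k. 1 - q 1 1 ^ j * q 1 2 * q 2 1)"

lemma x1pow_Suc: "x1pow (Suc m) = tmult (tgen 1) (x1pow m)"
  by (simp add: x1pow_def)

lemma x1pow_eq: "x1pow m w = (if w = replicate m 1 then 1 else 0)"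
proof (induction m arbitrary: w)
  case 0
  then show ?case by (simp add: x1pow_def tone_def)
next
  case (Suc m)
  have strip_x1: "tstrip (tgen 1) a = (\<lambda>u. if a = 1 then tone u else 0)" for a :: nat
    by (rule ext) (simp add: tstrip_def tgen_def tone_def)
  show ?case
  proof (cases w)
    case Nil
    then show ?thesis by (simp add: x1pow_def tmult_Nil tgen_def)
  next
    case (Cons a v)
    then have "x1pow (Suc m) w = tmult (tstrip (tgen 1) a) (x1pow m) v"
      by (simp add: x1pow_Suc tmult_Cons tgen_def)
    also have "\<dots> = (if a = 1 then x1pow m v else 0)"
      unfolding strip_x1 by (simp add: tmult_toneL tmult_zeroL)
    finally show ?thesis using Cons Suc.IH by auto
  qed
qed

lemma tgen1_eq_x1pow: "tgen 1 = x1pow 1"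
  by (rule ext) (simp add: x1pow_def tmult_toneR)

lemma x1pow_Nil: "x1pow m [] = (if m = 0 then 1 else 0)"
  by (simp add: x1pow_eq)

lemma x1pow_Cons: "x1pow (Suc m) (a # v) = (if a = 1 then x1pow m v else 0)" "x1pow 0 (a # v) = 0"
  by (simp_all add: x1pow_eq)

lemma tmult_x1pow: "tmult (x1pow m) (x1pow n) w = x1pow (m + n) w"
proof (induction m arbitrary: w)
  case 0
  then show ?case by (simp add: x1pow_def tmult_toneL)
next
  case (Suc m)
  have strip: "tstrip (x1pow (Suc m)) a = (\<lambda>u. if a = 1 then x1pow m u else 0)" for a :: nat
    by (rule ext) (simp add: tstrip_def x1pow_eq)
  show ?case
  proof (cases w)
    case (Cons a v)
    then show ?thesis
      using Suc.IH by (cases "a = 1") (simp_all add: tmult_Cons x1pow_Nil strip tmult_zeroL x1pow_Cons)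
  qed (simp add: tmult_Nil x1pow_Nil)
qed

lemma tK_x1pow: "tK q i (x1pow m) = (\<lambda>w. q i 1 ^ m * x1pow m w)"
  by (rule ext) (simp add: tK_def x1pow_eq)

lemma tder1_x1pow: "tder q 1 (x1pow m) = (\<lambda>w. qint q m * x1pow (m - 1) w)"
proof (induction m)
  case 0
  then show ?case by (simp add: x1pow_def tder_tone qint_def)
next
  case (Suc m)
  show ?case
  proof
    fix w
    have "tder q 1 (x1pow (Suc m)) w
        = tmult (tgen 1) (tder q 1 (x1pow m)) w + tmult (tder q 1 (tgen 1)) (tK q 1 (x1pow m)) w"
      unfolding x1pow_Suc by (rule tder_tmult)
    also have "tmult (tgen 1) (tder q 1 (x1pow m)) w = qint q m * x1pow m w"
      unfolding Suc.IH tmult_cmultR by (cases m) (simp_all add: qint_def x1pow_Suc)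
    also have "tmult (tder q 1 (tgen 1)) (tK q 1 (x1pow m)) w = q 1 1 ^ m * x1pow m w"
      by (simp add: tder_tgen tmult_toneL tK_x1pow)
    finally show "tder q 1 (x1pow (Suc m)) w = qint q (Suc m) * x1pow (Suc m - 1) w"
      by (simp add: qint_def algebra_simps)
  qed
qed

lemma tder_x1pow_other:
  assumes "i \<noteq> 1"
  shows "tder q i (x1pow m) = (\<lambda>w. 0)"
proof (induction m)
  case 0
  then show ?case by (simp add: x1pow_def tder_tone)
next
  case (Suc m)
  show ?case
    by (rule ext) (use Suc.IH assms in \<open>simp add: x1pow_Suc tder_tmult tder_tgen tmult_zeroR tmult_zeroL\<close>)
qed

lemma qfall_0: "qfall q m 0 = 1"
  by (simp add: qfall_def)

lemma qfall_Suc: "qfall q m (Suc b) = qfall q m b * qint q (m - b)"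
  by (simp add: qfall_def)

lemma qfall_eq_0: "m < b \<Longrightarrow> qfall q m b = 0"
  unfolding qfall_def by (rule prod_zero) (auto intro!: bexI[of _ m] simp: qint_def)

lemma qfall_Suc_Suc: "qfall q (Suc m) (Suc m) = qint q (Suc m) * qfall q m m"
  by (simp add: qfall_def prod.lessThan_Suc_shift del: prod.lessThan_Suc)

lemma yy_Nil: "yy q k [] = 0"
  by (induction k) (simp_all add: tgen_def tsub_def tsmult_def tmult_Nil)

lemma tK_yy: "tK q i (yy q k) = (\<lambda>u. q i 1 ^ k * q i 2 * yy q k u)"
proof (induction k)
  case 0
  then show ?case by (simp add: tK_tgen)
next
  case (Suc k)
  show ?case
  proof
    fix u
    have "tK q i (yy q (Suc k)) u
        = tK q i (tmult (tgen 1) (yy q k)) u - q 1 1 ^ k * q 1 2 * tK q i (tmult (yy q k) (tgen 1)) u"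
      by (simp add: tK_def tsub_def tsmult_def algebra_simps)
    also have "\<dots> = q i 1 ^ Suc k * q i 2 * yy q (Suc k) u"
      unfolding tK_tmult Suc.IH tK_tgen tmult_cmultL tmult_cmultR
      by (simp add: tsub_def tsmult_def algebra_simps)
    finally show "tK q i (yy q (Suc k)) u = q i 1 ^ Suc k * q i 2 * yy q (Suc k) u" .
  qed
qed

lemma tder_yy:
  "tder q 1 (yy q k) = (\<lambda>u. 0) \<and> tder q 2 (yy q k) = (\<lambda>u. ycoef q k * x1pow k u)"
proof (induction k)
  case 0
  then show ?case by (simp add: tder_tgen ycoef_def x1pow_def)
next
  case (Suc k)
  have split: "tder q i (yy q (Suc k)) u
      = tder q i (tmult (tgen 1) (yy q k)) u - q 1 1 ^ k * q 1 2 * tder q i (tmult (yy q k) (tgen 1)) u"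
    for i u
    by (simp add: tsub_def tsmult_def tder_diff tder_cmult)
  have "tder q 1 (yy q (Suc k)) u = 0" for u
    unfolding split tder_tmult using Suc.IH
    by (simp add: tder_tgen tK_yy tK_tgen tmult_zeroR tmult_zeroL tmult_toneL tmult_toneR)
  moreover have "tder q 2 (yy q (Suc k)) u = ycoef q (Suc k) * x1pow (Suc k) u" for u
  proof -
    have "tder q 2 (yy q (Suc k)) u = ycoef q k * tmult (tgen 1) (x1pow k) u
        - q 1 1 ^ k * q 1 2 * (ycoef q k * q 2 1 * tmult (x1pow k) (tgen 1) u)"
      unfolding split tder_tmult using Suc.IH
      by (simp add: tder_tgen tK_yy tK_tgen tmult_zeroR tmult_zeroL tmult_cmultL tmult_cmultR)
    also have "\<dots> = ycoef q (Suc k) * x1pow (Suc k) u"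
      unfolding tgen1_eq_x1pow tmult_x1pow
      by (simp add: ycoef_def x1pow_def algebra_simps)
    finally show ?thesis .
  qed
  ultimately show ?case by auto
qed

section \<open>Derivatives of \<open>y\<^sub>r y\<^sub>s\<close>\<close>

text \<open>Keeps the letter \<open>1\<close> from being rewritten to \<open>Suc 0\<close>, which would stop the lemmas
  about \<open>tder q 1\<close> from matching.\<close>

declare One_nat_def [simp del]

lemma tder_yy_x1pow:
  "tder q 1 (tmult (yy q r) (x1pow m)) = (\<lambda>u. qint q m * tmult (yy q r) (x1pow (m - 1)) u)"
  "tder q 2 (tmult (yy q r) (x1pow m)) = (\<lambda>u. ycoef q r * q 2 1 ^ m * x1pow (r + m) u)"
  by (rule ext; simp add: tder_tmult tder1_x1pow tder_x1pow_other tder_yy tmult_cmultR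
      tmult_cmultL tmult_zeroL tmult_zeroR tK_x1pow tmult_x1pow)+

lemma tder_x1pow_yy:
  "tder q 1 (tmult (x1pow m) (yy q s))
     = (\<lambda>u. qint q m * (q 1 1 ^ s * q 1 2) * tmult (x1pow (m - 1)) (yy q s) u)"
  "tder q 2 (tmult (x1pow m) (yy q s)) = (\<lambda>u. ycoef q s * x1pow (m + s) u)"
  by (rule ext; simp add: tder_tmult tder1_x1pow tder_x1pow_other tder_yy tmult_cmultR
      tmult_cmultL tmult_zeroL tmult_zeroR tK_yy tmult_x1pow)+

text \<open>The closed form of \<open>\<partial>\<^sub>1\<^sup>b \<partial>\<^sub>2 (y\<^sub>r y\<^sub>s)\<close>.\<close>

definition dyy :: "(nat \<Rightarrow> nat \<Rightarrow> 'k::field) \<Rightarrow> nat \<Rightarrow> nat \<Rightarrow> nat \<Rightarrow> 'k tens" where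
  "dyy q r s b = (\<lambda>u. ycoef q s * qfall q s b * tmult (yy q r) (x1pow (s - b)) u
     + ycoef q r * q 2 1 ^ s * q 2 2 * qfall q r b * (q 1 1 ^ s * q 1 2) ^ b
       * tmult (x1pow (r - b)) (yy q s) u)"

definition gcoef :: "(nat \<Rightarrow> nat \<Rightarrow> 'k::field) \<Rightarrow> nat \<Rightarrow> nat \<Rightarrow> nat \<Rightarrow> 'k" where
  "gcoef q r s b = qfall q s b * q 2 1 ^ (s - b)
     + q 2 1 ^ s * q 2 2 * (q 1 1 ^ s * q 1 2) ^ b * qfall q r b"

lemma tder_yy_yy:
  "tder q 1 (tmult (yy q r) (yy q s)) = (\<lambda>u. 0)"
  "tder q 2 (tmult (yy q r) (yy q s)) = dyy q r s 0"
  by (rule ext; simp add: tder_tmult tder_yy tmult_cmultR tmult_cmultL tmult_zeroL tmult_zeroR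
      tK_yy dyy_def qfall_0)+

lemma yy_yy_Nil: "tmult (yy q r) (yy q s) [] = 0"
  by (simp add: tmult_Nil yy_Nil)

lemma dyy_Nil: "dyy q r s b [] = 0"
  by (simp add: dyy_def tmult_Nil yy_Nil)

lemma tder1_dyy: "tder q 1 (dyy q r s b) = dyy q r s (Suc b)"
  unfolding dyy_def
  by (rule ext, simp only: tder_add mult.assoc tder_cmult tder_yy_x1pow tder_x1pow_yy)
    (simp add: qfall_Suc diff_Suc_eq_diff_pred ac_simps)

lemma tder2_dyy: "tder q 2 (dyy q r s b) = (\<lambda>u.
    ycoef q s * qfall q s b * (ycoef q r * q 2 1 ^ (s - b)) * x1pow (r + (s - b)) u
  + ycoef q r * q 2 1 ^ s * q 2 2 * qfall q r b * (q 1 1 ^ s * q 1 2) ^ b * ycoef q s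
    * x1pow (r - b + s) u)"
  unfolding dyy_def
  by (rule ext) (simp only: tder_add mult.assoc tder_cmult tder_yy_x1pow tder_x1pow_yy)

section \<open>Pairing with words\<close>

definition tpair :: "(nat \<Rightarrow> nat \<Rightarrow> 'k::field) \<Rightarrow> nat list \<Rightarrow> 'k tens \<Rightarrow> 'k" where
  "tpair q w f = foldr (tder q) w f []"

lemma nichols_zero_iff_tpair: "nichols_zero q f \<longleftrightarrow> (\<forall>w\<in>lists {1,2}. tpair q w f = 0)"
  by (simp add: nichols_zero_def tpair_def)

lemma tpair_Nil: "tpair q [] f = f []"
  by (simp add: tpair_def)

lemma tpair_snoc: "tpair q (w @ [i]) f = tpair q w (tder q i f)"
  by (simp add: tpair_def)

lemma foldr_tder_zero: "foldr (tder q) w (\<lambda>u. 0) = (\<lambda>u. 0)"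
  by (induction w) (simp_all add: tder_zero)

lemma foldr_tder_add:
  "foldr (tder q) w (\<lambda>u. f u + g u) = (\<lambda>u. foldr (tder q) w f u + foldr (tder q) w g u)"
  by (induction w) (simp_all add: tder_add)

lemma foldr_tder_diff:
  "foldr (tder q) w (\<lambda>u. f u - g u) = (\<lambda>u. foldr (tder q) w f u - foldr (tder q) w g u)"
  by (induction w) (simp_all add: tder_diff)

lemma foldr_tder_cmult: "foldr (tder q) w (\<lambda>u. c * f u) = (\<lambda>u. c * foldr (tder q) w f u)"
  by (induction w) (simp_all add: tder_cmult)

lemma foldr_tder_sum:
  "foldr (tder q) w (\<lambda>u. \<Sum>p\<in>S. h p u) = (\<lambda>u. \<Sum>p\<in>S. foldr (tder q) w (h p) u)"
  by (induction w) (simp_all add: tder_sum)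

lemma tpair_diff_cmult: "tpair q w (\<lambda>u. f u - c * g u) = tpair q w f - c * tpair q w g"
  by (simp add: tpair_def foldr_tder_diff foldr_tder_cmult)

lemma tpair_diff_lincomb:
  "tpair q w (\<lambda>u. f u - (\<Sum>p\<in>S. d p * g p u)) = tpair q w f - (\<Sum>p\<in>S. d p * tpair q w (g p))"
  by (simp add: tpair_def foldr_tder_diff foldr_tder_sum foldr_tder_cmult)

lemma nichols_zero_zero: "nichols_zero q (\<lambda>u. 0)"
  by (simp add: nichols_zero_iff_tpair tpair_def foldr_tder_zero)

lemma nichols_zeroI:
  assumes "f [] = 0" "nichols_zero q (tder q 1 f)" "nichols_zero q (tder q 2 f)"
  shows "nichols_zero q f"
  unfolding nichols_zero_iff_tpair
proof
  fix w :: "nat list"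
  assume "w \<in> lists {1,2}"
  then show "tpair q w f = 0"
    using assms by (cases w rule: rev_exhaust) (auto simp: tpair_Nil tpair_snoc nichols_zero_iff_tpair)
qed

lemma nichols_zero_tder1_chain:
  assumes "\<And>b. V b [] = 0" "\<And>b. tder q 1 (V b) = V (Suc b)"
    and "\<And>b. nichols_zero q (tder q 2 (V b))"
  shows "nichols_zero q (V b)"
proof -
  have "\<forall>b. tpair q w (V b) = 0" if "w \<in> lists {1,2}" for w
    using that
  proof (induction w rule: rev_induct)
    case (snoc i w)
    then have w: "w \<in> lists {1,2}" and i: "i = 1 \<or> i = 2" by auto
    show ?case
      using i
    proof
      assume "i = 1"
      then show ?thesis using snoc.IH w assms(2) by (simp add: tpair_snoc)
    next
      assume "i = 2"
      then show ?thesis using w assms(3) by (simp add: tpair_snoc nichols_zero_iff_tpair)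
    qed
  qed (simp add: tpair_Nil assms)
  then show ?thesis by (simp add: nichols_zero_iff_tpair)
qed

lemma tpair_x1pow: "tpair q w (x1pow p) = (if w = replicate p 1 then qfall q p p else 0)"
proof (induction w arbitrary: p rule: rev_induct)
  case Nil
  then show ?case by (simp add: tpair_Nil x1pow_Nil qfall_0)
next
  case (snoc i w)
  show ?case
  proof (cases "i = 1")
    case True
    show ?thesis
    proof (cases p)
      case 0
      then show ?thesis
        using True by (simp add: tpair_snoc tder1_x1pow qint_def tpair_def foldr_tder_zero)
    next
      case (Suc p')
      have "(w @ [i] = replicate p 1) = (w = replicate p' 1)"
        using True Suc by (metis replicate_Suc replicate_append_same append1_eq_conv)
      then show ?thesis
        using True Suc snoc.IH
        by (simp add: tpair_snoc tder1_x1pow tpair_def foldr_tder_cmult qfall_Suc_Suc)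
    qed
  next
    case False
    then have "w @ [i] \<noteq> replicate p 1"
      by (metis in_set_replicate last_in_set last_snoc snoc_eq_iff_butlast)
    then show ?thesis
      using False by (simp add: tpair_snoc tder_x1pow_other tpair_def foldr_tder_zero)
  qed
qed

lemma tpair_tder2_dyy: "tpair q w (tder q 2 (dyy q r s b)) =
  (if w = replicate (length w) 1 \<and> length w + b = r + s
   then ycoef q r * ycoef q s * qfall q (length w) (length w) * gcoef q r s b else 0)"
proof (cases "w = replicate (length w) 1")
  case True
  then have rep: "(w = replicate p 1) = (length w = p)" for p
    by (metis length_replicate)
  show ?thesis
    unfolding tder2_dyy tpair_def foldr_tder_add foldr_tder_cmult tpair_x1pow[unfolded tpair_def] rep
    using True by (cases "b \<le> s"; cases "b \<le> r") (auto simp: qfall_eq_0 gcoef_def algebra_simps)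
next
  case False
  then have "w \<noteq> replicate p 1" for p
    by auto
  then show ?thesis
    unfolding tder2_dyy tpair_def foldr_tder_add foldr_tder_cmult tpair_x1pow[unfolded tpair_def]
    using False by simp
qed

lemma funpow_tder1_dyy: "(tder q 1 ^^ b) (dyy q r s 0) = dyy q r s b"
  by (induction b) (simp_all add: tder1_dyy)

lemma tpair_yy_yy:
  "tpair q (replicate a 1 @ [2] @ replicate b 1 @ [2]) (tmult (yy q r) (yy q s)) =
    (if a + b = r + s then ycoef q r * ycoef q s * qfall q a a * gcoef q r s b else 0)"
proof -
  have "tpair q (replicate a 1 @ [2] @ replicate b 1 @ [2]) (tmult (yy q r) (yy q s))
      = tpair q (replicate a 1 @ [2]) (dyy q r s b)"
    by (simp add: tpair_def tder_yy_yy funpow_tder1_dyy)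
  also have "\<dots> = tpair q (replicate a 1) (tder q 2 (dyy q r s b))"
    by (rule tpair_snoc)
  finally show ?thesis
    by (simp add: tpair_tder2_dyy)
qed

section \<open>Linear relations among the products \<open>y\<^sub>r y\<^sub>s\<close>\<close>

lemma qfall_neq_0_if_x1pow_nonzero:
  assumes "\<not> nichols_zero q (tpow (tgen 1) n)" "b \<le> m" "m \<le> n"
  shows "qfall q m b \<noteq> 0"
proof -
  have "qfall q n n \<noteq> 0"
    using assms(1) by (auto simp: nichols_zero_iff_tpair tpair_x1pow x1pow_def[symmetric] split: if_splits)
  then have "qint q k \<noteq> 0" if "1 \<le> k" "k \<le> n" for k
  proof -
    have "n - k \<in> {..<n}" "n - (n - k) = k"
      using that by auto
    then show ?thesis
      using \<open>qfall q n n \<noteq> 0\<close> unfolding qfall_def by (metis finite_lessThan prod_zero_iff)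
  qed
  then show ?thesis
    unfolding qfall_def using assms(2,3) by auto
qed

lemma tgen_square_nichols_zero:
  fixes q :: "nat \<Rightarrow> nat \<Rightarrow> 'k::field"
  assumes "1 + q i i = 0"
  shows "nichols_zero q (tpow (tgen i) 2)"
proof -
  have tder_square: "tder q j (tmult (tgen i) (tgen i)) = (\<lambda>u. 0)" for j
  proof
    fix u
    have "tder q j (tmult (tgen i) (tgen i)) u = (if j = i then (1 + q i i) * tgen i u else 0)"
      by (simp add: tder_tmult tder_tgen tmult_toneR tmult_toneL tK_tgen tmult_zeroL tmult_zeroR
          algebra_simps)
    then show "tder q j (tmult (tgen i) (tgen i)) u = 0"
      using assms by simp
  qed
  have "tmult (tgen i) tone = (tgen i :: 'k tens)"
    by (rule ext) (rule tmult_toneR)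
  then have "tpow (tgen i) 2 = (tmult (tgen i) (tgen i) :: 'k tens)"
    by (simp add: numeral_2_eq_2)
  moreover have "nichols_zero q (tmult (tgen i) (tgen i))"
    by (rule nichols_zeroI) (simp add: tmult_Nil tgen_def, simp_all add: tder_square nichols_zero_zero)
  ultimately show ?thesis by simp
qed

lemma yy_nichols_zero: "ycoef q k = 0 \<Longrightarrow> nichols_zero q (yy q k)"
  by (rule nichols_zeroI) (simp_all add: yy_Nil tder_yy nichols_zero_zero)

text \<open>The braiding scalar of \<open>y\<^sub>r\<close> and \<open>y\<^sub>s\<close>: \<open>c(y\<^sub>r \<otimes> y\<^sub>s) = bichar q r s \<cdot> y\<^sub>s \<otimes> y\<^sub>r\<close>.\<close>

definition bichar :: "(nat \<Rightarrow> nat \<Rightarrow> 'k::field) \<Rightarrow> nat \<Rightarrow> nat \<Rightarrow> 'k" where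
  "bichar q r s = q 1 1 ^ (r * s) * q 1 2 ^ r * q 2 1 ^ s * q 2 2"

lemma gcoef_eq_0: "r < b \<Longrightarrow> s < b \<Longrightarrow> gcoef q r s b = 0"
  by (simp add: gcoef_def qfall_eq_0)

lemma gcoef_at_right: "r < s \<Longrightarrow> gcoef q r s s = qfall q s s"
  by (simp add: gcoef_def qfall_eq_0)

lemma gcoef_at_left: "s < r \<Longrightarrow> gcoef q r s r = bichar q r s * qfall q r r"
  by (simp add: gcoef_def qfall_eq_0 bichar_def power_mult_distrib mult_ac flip: power_mult)

lemma sum_antidiagonal_reindex:
  fixes S :: "(nat \<times> nat) set"
  assumes "finite S" "\<And>r s. (r, s) \<in> S \<Longrightarrow> r + s = n \<Longrightarrow> m \<le> s"
  shows "(\<Sum>(r, s)\<in>S. if r + s = n then F r s else 0)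
       = (\<Sum>s = m..n. if (n - s, s) \<in> S then F (n - s) s else 0)"
proof -
  define T where "T = (\<lambda>s. (n - s, s)) ` {m..n}"
  have "(r, s) \<in> T" if "(r, s) \<in> S" "r + s = n" for r s
  proof -
    have "s \<in> {m..n}" "(r, s) = (n - s, s)"
      using assms(2)[OF that] that(2) by auto
    then show ?thesis
      unfolding T_def by blast
  qed
  then have antidiagonal: "{p \<in> S. fst p + snd p = n} = S \<inter> T"
    by (auto simp: T_def)
  have "(\<Sum>(r, s)\<in>S. if r + s = n then F r s else 0) = (\<Sum>(r, s)\<in>{p \<in> S. fst p + snd p = n}. F r s)"
    using assms(1) by (simp add: sum.inter_filter case_prod_beta)
  also have "\<dots> = (\<Sum>(r, s)\<in>T. if (r, s) \<in> S then F r s else 0)"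
    using sum.inter_restrict[of T "\<lambda>(r, s). F r s" S]
    by (simp add: antidiagonal Int_commute T_def case_prod_beta cong: if_cong)
  also have "\<dots> = (\<Sum>s = m..n. if (n - s, s) \<in> S then F (n - s) s else 0)"
    unfolding T_def by (subst sum.reindex) (auto simp: inj_on_def)
  finally show ?thesis .
qed

lemma span_relation_gcoef:
  fixes c :: "nat \<Rightarrow> nat \<Rightarrow> 'k::field"
  assumes fin: "finite S" and ord: "\<forall>(r, s)\<in>S. r \<le> s"
    and nz: "nichols_zero q (\<lambda>w. tmult (yy q (l + 1)) (yy q l) w
               - (\<Sum>(r, s)\<in>S. c r s * tmult (yy q r) (yy q s) w))"
    and fac: "\<And>a. a \<le> 2 * l + 1 \<Longrightarrow> qfall q a a \<noteq> 0"
  shows "\<exists>D. \<forall>b \<le> 2 * l + 1. ycoef q (l + 1) * ycoef q l * gcoef q (l + 1) l b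
                              = (\<Sum>s = l + 1..2 * l + 1. D s * gcoef q (2 * l + 1 - s) s b)"
proof -
  define n where "n = 2 * l + 1"
  define D where "D s = (if (n - s, s) \<in> S then c (n - s) s * ycoef q (n - s) * ycoef q s else 0)"
    for s
  have "ycoef q (l + 1) * ycoef q l * gcoef q (l + 1) l b = (\<Sum>s = l + 1..n. D s * gcoef q (n - s) s b)"
    if "b \<le> n" for b
  proof -
    define a where "a = n - b"
    define H where "H r s = (if r + s = n then ycoef q r * ycoef q s * gcoef q r s b else 0)" for r s
    have ab: "a + b = n"
      using that by (simp add: a_def)
    have tpair_word: "tpair q (replicate a 1 @ [2] @ replicate b 1 @ [2]) (tmult (yy q r) (yy q s))
        = qfall q a a * H r s" for r s
      unfolding tpair_yy_yy H_def ab by (simp add: mult_ac)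
    have "replicate a 1 @ [2] @ replicate b 1 @ [2] \<in> lists {1, 2}"
      by auto
    then have "tpair q (replicate a 1 @ [2] @ replicate b 1 @ [2])
        (\<lambda>w. tmult (yy q (l + 1)) (yy q l) w
           - (\<Sum>p\<in>S. c (fst p) (snd p) * tmult (yy q (fst p)) (yy q (snd p)) w)) = 0"
      using nz unfolding nichols_zero_iff_tpair case_prod_unfold by blast
    then have "qfall q a a * H (l + 1) l - (\<Sum>p\<in>S. c (fst p) (snd p) * (qfall q a a * H (fst p) (snd p))) = 0"
      by (simp only: tpair_diff_lincomb tpair_word)
    then have "qfall q a a * (H (l + 1) l - (\<Sum>p\<in>S. c (fst p) (snd p) * H (fst p) (snd p))) = 0"
      by (simp add: right_diff_distrib sum_distrib_left mult_ac)
    then have "H (l + 1) l = (\<Sum>(r, s)\<in>S. c r s * H r s)"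
      using fac[of a] ab by (auto simp: case_prod_unfold n_def)
    also have "\<dots> = (\<Sum>(r, s)\<in>S. if r + s = n then c r s * ycoef q r * ycoef q s * gcoef q r s b else 0)"
      by (intro sum.cong refl) (auto simp: H_def)
    also have "\<dots> = (\<Sum>s = l + 1..n. if (n - s, s) \<in> S
        then c (n - s) s * ycoef q (n - s) * ycoef q s * gcoef q (n - s) s b else 0)"
      by (rule sum_antidiagonal_reindex[OF fin]) (use ord in \<open>auto simp: n_def\<close>)
    also have "\<dots> = (\<Sum>s = l + 1..n. D s * gcoef q (n - s) s b)"
      by (intro sum.cong refl) (simp add: D_def)
    finally show ?thesis
      by (simp add: H_def n_def)
  qed
  then show ?thesis
    unfolding n_def by blast
qed

text \<open>The matrix \<open>gcoef q (n - s) s b\<close> (\<open>b, s \<ge> l + 1\<close>) is triangular with nonzero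
  diagonal \<open>qfall q s s\<close>, while the left hand side vanishes for \<open>b \<ge> l + 2\<close>; so every
  coefficient except that of \<open>y\<^sub>l y\<^sub>l\<^sub>+\<^sub>1\<close> is zero.\<close>

lemma span_relation_collapse:
  assumes rel: "\<And>b. b \<le> 2 * l + 1 \<Longrightarrow>
      e * gcoef q (l + 1) l b = (\<Sum>s = l + 1..2 * l + 1. D s * gcoef q (2 * l + 1 - s) s b)"
    and fac: "\<And>a. a \<le> 2 * l + 1 \<Longrightarrow> qfall q a a \<noteq> 0"
  shows "e * gcoef q (l + 1) l b = D (l + 1) * gcoef q l (l + 1) b"
proof -
  define n where "n = 2 * l + 1"
  have D_eq_0: "D s = 0" if "l + 2 \<le> s" "s \<le> n" for s
    using that
  proof (induction "n - s" arbitrary: s rule: less_induct)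
    case less
    have others: "D y * gcoef q (n - y) y s = 0" if "y \<in> {l + 1..n} - {s}" for y
    proof (cases "y < s")
      case True
      then show ?thesis
        using that less.prems by (simp add: gcoef_eq_0 n_def)
    next
      case False
      then have "D y = 0"
        using that less.prems by (intro less.hyps) auto
      then show ?thesis by simp
    qed
    have "e * gcoef q (l + 1) l s = (\<Sum>y = l + 1..n. D y * gcoef q (n - y) y s)"
      using rel less.prems by (simp add: n_def)
    also have "\<dots> = D s * gcoef q (n - s) s s + (\<Sum>y \<in> {l + 1..n} - {s}. D y * gcoef q (n - y) y s)"
      using less.prems by (simp add: sum.remove[of _ s])
    also have "(\<Sum>y \<in> {l + 1..n} - {s}. D y * gcoef q (n - y) y s) = 0"
      using others by (intro sum.neutral) blast
    also have "gcoef q (n - s) s s = qfall q s s"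
      using less.prems by (simp add: gcoef_at_right n_def)
    finally have "D s * qfall q s s = 0"
      using less.prems by (simp add: gcoef_eq_0)
    then show ?case
      using fac less.prems by (simp add: n_def)
  qed
  show ?thesis
  proof (cases "b \<le> n")
    case True
    have "e * gcoef q (l + 1) l b = (\<Sum>s = l + 1..n. D s * gcoef q (n - s) s b)"
      using rel True by (simp add: n_def)
    also have "\<dots> = D (l + 1) * gcoef q (n - (l + 1)) (l + 1) b"
      using D_eq_0 by (simp add: sum.remove[of _ "l + 1"] n_def)
    finally show ?thesis
      by (simp add: n_def)
  next
    case False
    then show ?thesis
      by (simp add: gcoef_eq_0 n_def)
  qed
qed

lemma gcoef_proportional:
  assumes rel: "\<And>b. e * gcoef q r s b = d * gcoef q s r b"
    and "e \<noteq> 0" "qfall q r r \<noteq> 0" "s < r"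
  shows "gcoef q r s b = bichar q r s * gcoef q s r b"
proof -
  have "e * (bichar q r s * qfall q r r) = d * qfall q r r"
    using rel[of r] \<open>s < r\<close> by (simp add: gcoef_at_left gcoef_at_right)
  then have "d = e * bichar q r s"
    using \<open>qfall q r r \<noteq> 0\<close> by (simp add: mult_ac)
  then show ?thesis
    using rel[of b] \<open>e \<noteq> 0\<close> by (simp add: mult_ac)
qed

lemma bichar_constraint:
  assumes "gcoef q (l + 1) l 0 = bichar q (l + 1) l * gcoef q l (l + 1) 0"
    and "q 2 1 \<noteq> 0" "1 + q 2 2 \<noteq> 0"
  shows "bichar q (l + 1) l * q 2 1 = 1"
proof -
  have "q 2 1 ^ l * (1 + q 2 2) = gcoef q (l + 1) l 0"
    by (simp add: gcoef_def qfall_0 algebra_simps)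
  also have "\<dots> = bichar q (l + 1) l * gcoef q l (l + 1) 0"
    by (rule assms(1))
  also have "gcoef q l (l + 1) 0 = q 2 1 ^ l * q 2 1 * (1 + q 2 2)"
    by (simp add: gcoef_def qfall_0 algebra_simps power_add)
  finally have "q 2 1 ^ l * (1 + q 2 2) = q 2 1 ^ l * (bichar q (l + 1) l * q 2 1) * (1 + q 2 2)"
    by (simp add: mult_ac)
  then show ?thesis
    using assms(2,3) by simp
qed

lemma yy_commute_if_gcoef_proportional:
  assumes "\<And>b. gcoef q r s b = c * gcoef q s r b"
  shows "nichols_zero q (tsub (tmult (yy q r) (yy q s)) (tsmult c (tmult (yy q s) (yy q r))))"
proof (rule nichols_zeroI)
  define V where "V b = (\<lambda>u. dyy q r s b u - c * dyy q s r b u)" for b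
  have "nichols_zero q (V b)" for b
  proof (rule nichols_zero_tder1_chain)
    fix b
    show "V b [] = 0"
      by (simp add: V_def dyy_Nil)
    show "tder q 1 (V b) = V (Suc b)"
      by (rule ext) (simp add: V_def tder_diff tder_cmult tder1_dyy)
    have "tder q 2 (V b) = (\<lambda>u. tder q 2 (dyy q r s b) u - c * tder q 2 (dyy q s r b) u)"
      by (rule ext) (simp add: V_def tder_diff tder_cmult)
    then show "nichols_zero q (tder q 2 (V b))"
      using assms unfolding nichols_zero_iff_tpair
      by (simp add: tpair_diff_cmult tpair_tder2_dyy add.commute mult_ac)
  qed
  moreover have "tder q 2 (tsub (tmult (yy q r) (yy q s)) (tsmult c (tmult (yy q s) (yy q r)))) = V 0"
    by (rule ext) (simp add: tsub_def tsmult_def tder_diff tder_cmult tder_yy_yy V_def)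
  ultimately show "nichols_zero q (tder q 2 (tsub (tmult (yy q r) (yy q s)) (tsmult c (tmult (yy q s) (yy q r)))))"
    by simp
  have "tder q 1 (tsub (tmult (yy q r) (yy q s)) (tsmult c (tmult (yy q s) (yy q r)))) = (\<lambda>u. 0)"
    by (rule ext) (simp add: tsub_def tsmult_def tder_diff tder_cmult tder_yy_yy)
  then show "nichols_zero q (tder q 1 (tsub (tmult (yy q r) (yy q s)) (tsmult c (tmult (yy q s) (yy q r)))))"
    by (simp add: nichols_zero_zero)
  show "tsub (tmult (yy q r) (yy q s)) (tsmult c (tmult (yy q s) (yy q r))) [] = 0"
    by (simp add: tsub_def tsmult_def yy_yy_Nil)
qed

theorem lemma4:
  fixes q :: "nat \<Rightarrow> nat \<Rightarrow> 'k::{alg_closed_field, field_char_0}"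
    and l :: nat
  assumes q_nz: "\<And>i j. i \<in> {1,2} \<Longrightarrow> j \<in> {1,2} \<Longrightarrow> q i j \<noteq> 0"
    and q11: "q 1 1 \<noteq> 1" and q22: "q 2 2 \<noteq> 1"
    and h1: "\<not> nichols_zero q (tpow (tgen 1) (2 * l + 1))"
    and h2: "\<not> nichols_zero q (tpow (tgen 2) 2)"
    and h3: "\<not> nichols_zero q (yy q (l + 1))"
    and h4: "\<exists>(S :: (nat \<times> nat) set) (c :: nat \<Rightarrow> nat \<Rightarrow> 'k).
               finite S \<and> (\<forall>(r, s)\<in>S. r \<le> s) \<and>
               nichols_zero q (\<lambda>w. tmult (yy q (l + 1)) (yy q l) w
                  - (\<Sum>(r, s)\<in>S. c r s * tmult (yy q r) (yy q s) w))"
  shows "q 1 1 ^ (l * (l + 1)) * (q 1 2 * q 2 1) ^ (l + 1) * q 2 2 = 1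
    \<and> nichols_zero q (tsub (tmult (yy q (l + 1)) (yy q l))
         (tsmult (q 1 1 ^ (l * (l + 1)) * q 1 2 ^ (l + 1) * q 2 1 ^ l * q 2 2)
                 (tmult (yy q l) (yy q (l + 1)))))"
proof -
  have fac: "qfall q a a \<noteq> 0" if "a \<le> 2 * l + 1" for a
    using qfall_neq_0_if_x1pow_nonzero[OF h1 order_refl that] .
  have q22': "1 + q 2 2 \<noteq> 0"
    using h2 tgen_square_nichols_zero[of q 2] by blast
  have "ycoef q (l + 1) \<noteq> 0"
    using h3 yy_nichols_zero by blast
  then have ycoef_nz: "ycoef q (l + 1) * ycoef q l \<noteq> 0"
    by (simp add: ycoef_def)
  from h4 obtain S and c :: "nat \<Rightarrow> nat \<Rightarrow> 'k" where "finite S" "\<forall>(r, s)\<in>S. r \<le> s"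
    and "nichols_zero q (\<lambda>w. tmult (yy q (l + 1)) (yy q l) w
           - (\<Sum>(r, s)\<in>S. c r s * tmult (yy q r) (yy q s) w))"
    by blast
  from span_relation_gcoef[OF this fac] obtain D
    where "\<forall>b \<le> 2 * l + 1. ycoef q (l + 1) * ycoef q l * gcoef q (l + 1) l b
      = (\<Sum>s = l + 1..2 * l + 1. D s * gcoef q (2 * l + 1 - s) s b)"
    by blast
  then have "ycoef q (l + 1) * ycoef q l * gcoef q (l + 1) l b = D (l + 1) * gcoef q l (l + 1) b" for b
    by (intro span_relation_collapse[OF _ fac]) blast
  then have proportional: "gcoef q (l + 1) l b = bichar q (l + 1) l * gcoef q l (l + 1) b" for b
    by (rule gcoef_proportional[OF _ ycoef_nz fac]) simp_all
  have "bichar q (l + 1) l * q 2 1 = 1"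
    by (rule bichar_constraint[OF proportional]) (simp_all add: q_nz q22')
  moreover have "bichar q (l + 1) l = q 1 1 ^ (l * (l + 1)) * q 1 2 ^ (l + 1) * q 2 1 ^ l * q 2 2"
    by (simp add: bichar_def mult.commute)
  ultimately show ?thesis
    using yy_commute_if_gcoef_proportional[OF proportional]
    by (simp add: power_mult_distrib power_add mult_ac)
qed

end
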